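(* Let $d\ge1$, $T\ge2$, $p\ge2$, and let $\{X_j\}_{j\ge1}\subset\mathbb R^d$ be a martingale difference sequence with respect to $\{\mathcal F_j\}_{j\ge0}$ with finite conditional covariances and $\sup_j\|X_j\|_\infty\le\varkappa$ a.s. Then $$\Big(\mathsf E\Big\|\sum_{j=1}^TX_j\Big\|_\infty^p\Big)^{1/p}\le4p\log(2dT^2)\Bigg(\varkappa+\Big(\sum_{j=1}^T\big(\mathsf E\|X_j\|_\infty^p\big)^{2/p}\Big)^{1/2}\Bigg).$$
   Context: $\|\cdot\|_\infty$ is the max-norm on $\mathbb R^d$. A martingale difference sequence means $X_j$ is $\mathcal F_j$-measurable, integrable, and $\mathsf E[X_j\mid\mathcal F_{j-1}]=0$. *)

theory Defs
  imports "HOL-Analysis.Analysis" "HOL-Probability.Probability"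
begin

text \<open>Max-norm on R^d, with R^d rendered as real^'d for a finite index type 'd (d = CARD('d)).\<close>
definition maxnorm :: "real ^ 'd \<Rightarrow> real" where
  "maxnorm x = (MAX i. \<bar>x $ i\<bar>)"

definition martingale_difference_seq ::
  "'a measure \<Rightarrow> (nat \<Rightarrow> 'a measure) \<Rightarrow> (nat \<Rightarrow> 'a \<Rightarrow> real ^ 'd) \<Rightarrow> bool" where
  "martingale_difference_seq M F X \<longleftrightarrow>
     (\<forall>j. subalgebra M (F j)) \<and> filtration (space M) F \<and>
     (\<forall>j\<ge>1. \<forall>i.
        (\<lambda>\<omega>. X j \<omega> $ i) \<in> borel_measurable (F j) \<and>
        integrable M (\<lambda>\<omega>. X j \<omega> $ i) \<and>
        (AE \<omega> in M. real_cond_exp M (F (j - 1)) (\<lambda>\<omega>. X j \<omega> $ i) \<omega> = 0))"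

end

theory Submission
  imports Defs
begin

(* For a coordinate i, a sign s and a level c with c * kappa <= 1/2, the process
   exp (sum_{j <= n} (s c X_j(i) - 2 (s c X_j(i))^2)) is a positive supermartingale, since
   exp (y - 2 y^2) <= 1 + y for |y| <= 1/2; hence its expectation is at most 1.  Summing over
   the 2d pairs (i, s) and over the T dyadic levels c_m = 1 / (2 kappa 2^m) yields a random
   variable Z with E Z <= 2 d T.  Peeling over the dyadic level of x = |S_T|_oo shows that,
   with Q = sum_j |X_j|_oo^2, pointwise
     x^p <= (2 kappa b)^p + (16 b Q)^(p/2) + (T kappa)^p exp (-b/2) Z.
   Taking expectations, bounding E Q^(p/2) by Minkowski's inequality in L^(p/2), and choosing
   b = (p + 1) log (2 d T) + 2 p log T gives the bound. *)

lemma exp_diff_twice_square_le: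
  fixes y :: real
  assumes "\<bar>y\<bar> \<le> 1/2"
  shows "exp (y - 2 * y\<^sup>2) \<le> 1 + y"
proof -
  have "y - 2 * y\<^sup>2 \<le> ln (1 + y)"
  proof (cases "y \<ge> 0")
    case True
    then have "\<bar>ln (1 + y) - y\<bar> \<le> y\<^sup>2"
      using assms by (intro abs_ln_one_plus_x_minus_x_bound_nonneg) auto
    then show ?thesis by (smt (verit) zero_le_power2)
  next
    case False
    then have "\<bar>ln (1 + y) - y\<bar> \<le> 2 * y\<^sup>2"
      using assms by (intro abs_ln_one_plus_x_minus_x_bound_nonpos) auto
    then show ?thesis by linarith
  qed
  then have "exp (y - 2 * y\<^sup>2) \<le> exp (ln (1 + y))" by simp
  also have "\<dots> = 1 + y" using assms by simp
  finally show ?thesis .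
qed

lemma diff_twice_square_le: "(y::real) - 2 * y\<^sup>2 \<le> 1/8"
proof -
  have "0 \<le> 2 * (y - 1/4)\<^sup>2" by simp
  then show ?thesis by (simp add: power2_eq_square algebra_simps)
qed

lemma powr_superadditive:
  fixes a b p :: real
  assumes "0 \<le> a" "0 \<le> b" "1 \<le> p"
  shows "a powr p + b powr p \<le> (a + b) powr p"
proof -
  have "x powr p \<le> x * (a + b) powr (p - 1)" if "0 \<le> x" "x \<le> a + b" for x
  proof -
    have "x powr p = x * x powr (p - 1)" using that by (simp add: powr_mult_base)
    also have "\<dots> \<le> x * (a + b) powr (p - 1)"
      using that assms by (intro mult_left_mono powr_mono2) auto
    finally show ?thesis .
  qed
  then have "a powr p + b powr p \<le> (a + b) * (a + b) powr (p - 1)"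
    using assms by (smt (verit) distrib_right)
  also have "\<dots> = (a + b) powr p" using assms by (simp add: powr_mult_base)
  finally show ?thesis .
qed

lemma powr_root_le_add_of_le_sum_powr:
  fixes E a b c p :: real
  assumes "0 \<le> E" "0 \<le> a" "0 \<le> b" "0 \<le> c" "1 \<le> p"
    and "E \<le> a powr p + b powr p + c powr p"
  shows "E powr (1 / p) \<le> a + b + c"
proof -
  have "E \<le> (a + b + c) powr p"
    using assms powr_superadditive[of a b p] powr_superadditive[of "a + b" c p] by linarith
  then have "E powr (1 / p) \<le> ((a + b + c) powr p) powr (1 / p)"
    using assms by (intro powr_mono2) auto
  also have "\<dots> = a + b + c" using assms by (simp add: powr_powr)
  finally show ?thesis .
qed

lemma square_powr_half: "0 \<le> y \<Longrightarrow> (y\<^sup>2) powr (p / 2) = (y::real) powr p"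
  by (simp add: powr_powr flip: powr_numeral)

lemma convex_on_powr_nonneg:
  fixes r :: real
  assumes "1 \<le> r"
  shows "convex_on {0..} (\<lambda>x. x powr r)"
proof (rule convex_onI)
  fix t x y :: real
  assume t: "0 < t" "t < 1" and xy: "x \<in> {0..}" "y \<in> {0..}"
  have le: "(s * z) powr r \<le> s * z powr r" if "0 \<le> s" "s \<le> 1" "0 \<le> z" for s z :: real
  proof -
    have "s powr r \<le> s powr 1" using powr_mono'[of 1 r s] that assms by simp
    then show ?thesis using that by (simp add: powr_mult mult_right_mono)
  qed
  show "((1 - t) *\<^sub>R x + t *\<^sub>R y) powr r \<le> (1 - t) * x powr r + t * y powr r"
  proof (cases "x = 0 \<or> y = 0")
    case True
    then show ?thesis using le[of t y] le[of "1 - t" x] t xy by auto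
  next
    case False
    then show ?thesis using convex_onD[OF powr_convex[OF assms], of t x y] t xy by auto
  qed
qed simp

lemma integral_powr_sum_le_weighted:
  fixes Y :: "'i \<Rightarrow> 'a \<Rightarrow> real" and w :: "'i \<Rightarrow> real"
  assumes J: "finite J" "J \<noteq> {}" and r: "1 \<le> r"
    and w: "\<And>j. j \<in> J \<Longrightarrow> 0 < w j" "sum w J = 1"
    and Y: "\<And>j x. j \<in> J \<Longrightarrow> 0 \<le> Y j x"
    and int_Y: "\<And>j. j \<in> J \<Longrightarrow> integrable M (\<lambda>x. Y j x powr r)"
    and int_sum: "integrable M (\<lambda>x. (\<Sum>j\<in>J. Y j x) powr r)"
  shows "integral\<^sup>L M (\<lambda>x. (\<Sum>j\<in>J. Y j x) powr r)
      \<le> (\<Sum>j\<in>J. w j powr (1 - r) * integral\<^sup>L M (\<lambda>x. Y j x powr r))"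
proof -
  have jensen: "(\<Sum>j\<in>J. Y j x) powr r \<le> (\<Sum>j\<in>J. w j powr (1 - r) * Y j x powr r)" for x
  proof -
    have "(\<Sum>j\<in>J. Y j x) powr r = (\<Sum>j\<in>J. w j *\<^sub>R (Y j x / w j)) powr r"
      using w(1) by (intro arg_cong[where f="\<lambda>t. t powr r"] sum.cong) force+
    also have "\<dots> \<le> (\<Sum>j\<in>J. w j * (Y j x / w j) powr r)"
      using w Y by (intro convex_on_sum[OF J convex_on_powr_nonneg[OF r]])
        (auto intro: less_imp_le divide_nonneg_pos)
    also have "\<dots> = (\<Sum>j\<in>J. w j powr (1 - r) * Y j x powr r)"
      using w(1) Y by (intro sum.cong) (simp_all add: powr_divide powr_diff abs_of_pos)
    finally show ?thesis .
  qed
  have "integral\<^sup>L M (\<lambda>x. (\<Sum>j\<in>J. Y j x) powr r)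
      \<le> integral\<^sup>L M (\<lambda>x. \<Sum>j\<in>J. w j powr (1 - r) * Y j x powr r)"
    using int_sum int_Y jensen by (intro integral_mono) auto
  also have "\<dots> = (\<Sum>j\<in>J. w j powr (1 - r) * integral\<^sup>L M (\<lambda>x. Y j x powr r))"
    using int_Y by (simp add: integral_sum)
  finally show ?thesis .
qed

lemma integral_powr_sum_le_sum_powr:
  fixes Y :: "'i \<Rightarrow> 'a \<Rightarrow> real"
  assumes J: "finite J" and r: "1 \<le> r"
    and Y: "\<And>j x. j \<in> J \<Longrightarrow> 0 \<le> Y j x"
    and int_Y: "\<And>j. j \<in> J \<Longrightarrow> integrable M (\<lambda>x. Y j x powr r)"
    and int_sum: "integrable M (\<lambda>x. (\<Sum>j\<in>J. Y j x) powr r)"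
  shows "integral\<^sup>L M (\<lambda>x. (\<Sum>j\<in>J. Y j x) powr r)
      \<le> (\<Sum>j\<in>J. (integral\<^sup>L M (\<lambda>x. Y j x powr r)) powr (1 / r)) powr r"
proof (cases "J = {}")
  case True
  then show ?thesis by simp
next
  case J_ne: False
  define E where "E = integral\<^sup>L M (\<lambda>x. (\<Sum>j\<in>J. Y j x) powr r)"
  define c where "c j = (integral\<^sup>L M (\<lambda>x. Y j x powr r)) powr (1 / r)" for j
  define C where "C = (\<Sum>j\<in>J. c j)"
  have E: "0 \<le> E" unfolding E_def by (intro integral_nonneg_AE) auto
  have c: "0 \<le> c j" for j unfolding c_def by simp
  have C: "0 \<le> C" unfolding C_def using c by (simp add: sum_nonneg)
  have c_powr: "c j powr r = integral\<^sup>L M (\<lambda>x. Y j x powr r)" for j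
    unfolding c_def using r by (simp add: powr_powr integral_nonneg_AE)
  \<comment> \<open>Weights proportional to the perturbed norms \<open>c j + \<delta>\<close> make the weighted bound sharp up to \<open>e\<close>.\<close>
  have E_le: "E \<le> (C + e) powr r" if e: "0 < e" for e
  proof -
    define \<delta> where "\<delta> = e / card J"
    have \<delta>: "0 < \<delta>" unfolding \<delta>_def using e J J_ne by (simp add: card_gt_0_iff)
    have Ce: "0 < C + e" using C e by simp
    define w where "w j = (c j + \<delta>) / (C + e)" for j
    have w: "0 < w j" for j unfolding w_def using c \<delta> Ce by (simp add: add_nonneg_pos)
    have "(\<Sum>j\<in>J. c j + \<delta>) = C + e"
      unfolding C_def \<delta>_def using J J_ne by (simp add: sum.distrib card_gt_0_iff)
    then have w_sum: "sum w J = 1" unfolding w_def using Ce by (simp add: sum_divide_distrib[symmetric])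
    have "E \<le> (\<Sum>j\<in>J. w j powr (1 - r) * c j powr r)"
      unfolding E_def c_powr using w w_sum Y int_Y int_sum
      by (intro integral_powr_sum_le_weighted[OF J J_ne r]) auto
    also have "\<dots> \<le> (\<Sum>j\<in>J. w j powr (1 - r) * (w j * (C + e)) powr r)"
      unfolding w_def using c \<delta> Ce r by (intro sum_mono mult_left_mono powr_mono2) auto
    also have "\<dots> = (\<Sum>j\<in>J. w j * (C + e) powr r)"
      using w Ce by (intro sum.cong) (simp_all add: powr_mult powr_diff abs_of_pos)
    also have "\<dots> = (C + e) powr r" using w_sum by (simp add: sum_distrib_right[symmetric])
    finally show ?thesis .
  qed
  have "E powr (1 / r) \<le> C + e" if "0 < e" for e
  proof -
    have "E powr (1 / r) \<le> ((C + e) powr r) powr (1 / r)"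
      using E_le[OF that] E r by (intro powr_mono2) auto
    also have "\<dots> = C + e" using r that C by (simp add: powr_powr)
    finally show ?thesis .
  qed
  then have "E powr (1 / r) \<le> C" by (rule field_le_epsilon)
  then have "(E powr (1 / r)) powr r \<le> C powr r" using r by (intro powr_mono2) auto
  then show ?thesis unfolding E_def C_def c_def using r E_def E by (simp add: powr_powr)
qed

lemma exists_dyadic_level:
  fixes c x :: real
  assumes "c \<le> x" "x < c * 2 ^ n"
  shows "\<exists>m<n. c * 2 ^ m \<le> x \<and> x < c * 2 ^ Suc m"
  using assms
proof (induction n)
  case (Suc n)
  then show ?case
    by (cases "x < c * 2 ^ n") (auto intro: less_SucI)
qed simp

lemma dyadic_level_exponent_ge:
  fixes x Q \<kappa> b :: real and m :: nat
  defines "l \<equiv> 1 / (2 * \<kappa> * 2 ^ m)"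
  assumes \<kappa>: "0 < \<kappa>" and b: "1 \<le> b"
    and x: "2 * \<kappa> * b * 2 ^ m \<le> x" "x < 2 * \<kappa> * b * 2 ^ Suc m" and Q: "16 * b * Q \<le> x\<^sup>2"
  shows "b / 2 \<le> l * x - 2 * l\<^sup>2 * Q"
proof -
  have l: "0 < l" unfolding l_def using \<kappa> by simp
  have lx: "b \<le> l * x" using x(1) \<kappa> unfolding l_def by (simp add: field_simps)
  have "l * x < 2 * b" using x(2) \<kappa> unfolding l_def by (simp add: field_simps)
  then have "(l * x)\<^sup>2 < (2 * b)\<^sup>2" using lx b by (intro power_strict_mono) auto
  moreover have "2 * l\<^sup>2 * Q * (8 * b) \<le> (l * x)\<^sup>2"
    using Q mult_left_mono[OF Q, of "l\<^sup>2"] by (simp add: power_mult_distrib algebra_simps)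
  ultimately have "2 * l\<^sup>2 * Q * (8 * b) < (2 * b)\<^sup>2" by linarith
  also have "\<dots> = b / 2 * (8 * b)" by (simp add: power2_eq_square)
  finally have "2 * l\<^sup>2 * Q * (8 * b) < b / 2 * (8 * b)" .
  then have "2 * l\<^sup>2 * Q < b / 2" using b by (simp add: algebra_simps)
  then show ?thesis using lx by simp
qed

lemma powr_le_peeling_bound:
  fixes x Q \<kappa> b p :: real and T :: nat and Z :: "nat \<Rightarrow> real"
  assumes \<kappa>: "0 \<le> \<kappa>" and b: "1 \<le> b" and p: "0 < p"
    and x: "0 \<le> x" "x \<le> T * \<kappa>" and Q: "0 \<le> Q"
    and Z: "\<And>m. 0 \<le> Z m"
    and Z_ge: "\<And>m. exp (1 / (2 * \<kappa> * 2 ^ m) * x - 2 * (1 / (2 * \<kappa> * 2 ^ m))\<^sup>2 * Q) \<le> Z m"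
  shows "x powr p \<le> (2 * \<kappa> * b) powr p + (16 * b * Q) powr (p / 2)
           + (T * \<kappa>) powr p * exp (- b / 2) * (\<Sum>m<T. Z m)"
proof -
  have nonneg: "0 \<le> (2 * \<kappa> * b) powr p" "0 \<le> (16 * b * Q) powr (p / 2)"
    "0 \<le> (T * \<kappa>) powr p * exp (- b / 2) * (\<Sum>m<T. Z m)"
    using Z by (auto intro!: sum_nonneg mult_nonneg_nonneg)
  consider "x = 0" | "x < 2 * \<kappa> * b" | "x\<^sup>2 < 16 * b * Q"
    | "0 < x" "2 * \<kappa> * b \<le> x" "16 * b * Q \<le> x\<^sup>2"
    using x by linarith
  then show ?thesis
  proof cases
    case 1
    then show ?thesis using nonneg p by simp
  next
    case 2
    then have "x powr p \<le> (2 * \<kappa> * b) powr p" using x p by (intro powr_mono2) auto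
    then show ?thesis using nonneg by linarith
  next
    case 3
    have "x powr p = (x\<^sup>2) powr (p / 2)" using square_powr_half[OF x(1)] by simp
    also have "\<dots> \<le> (16 * b * Q) powr (p / 2)" using 3 p by (intro powr_mono2) auto
    finally show ?thesis using nonneg by linarith
  next
    case 4
    then have \<kappa>: "0 < \<kappa>" using x by (smt (verit) mult_nonneg_nonpos of_nat_0_le_iff)
    have "real T < 2 ^ T" by (rule of_nat_less_two_power)
    then have "T * \<kappa> < 2 ^ T * \<kappa>" using \<kappa> by simp
    also have "\<dots> \<le> 2 * \<kappa> * b * 2 ^ T" using \<kappa> b by simp
    finally have "x < 2 * \<kappa> * b * 2 ^ T" using x(2) by simp
    then obtain m where m: "m < T" "2 * \<kappa> * b * 2 ^ m \<le> x" "x < 2 * \<kappa> * b * 2 ^ Suc m"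
      using exists_dyadic_level 4 by blast
    have "exp (b / 2) \<le> Z m"
      using dyadic_level_exponent_ge[OF \<kappa> b m(2,3) 4(3)] Z_ge[of m] by (meson exp_le_cancel_iff order_trans)
    also have "\<dots> \<le> (\<Sum>m<T. Z m)" using m(1) Z by (intro member_le_sum) auto
    finally have "1 \<le> exp (- b / 2) * (\<Sum>m<T. Z m)" by (simp add: exp_minus field_simps)
    then have "(T * \<kappa>) powr p \<le> (T * \<kappa>) powr p * exp (- b / 2) * (\<Sum>m<T. Z m)"
      by (simp add: mult.assoc mult_le_cancel_left1)
    moreover have "x powr p \<le> (T * \<kappa>) powr p" using x p by (intro powr_mono2) auto
    ultimately show ?thesis using nonneg by linarith
  qed
qed

lemma peeling_parameter_bounds:
  fixes d p :: real and T :: nat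
  defines "b \<equiv> (p + 1) * ln (2 * d * T) + 2 * p * ln T"
  assumes d: "1 \<le> d" and T: "2 \<le> T" and p: "2 \<le> p"
  shows "1 \<le> b"
    and "real T powr p * exp (- b / 2) * (T * (2 * d)) \<le> 1"
    and "2 * b + 1 \<le> 4 * p * ln (2 * d * T\<^sup>2)"
    and "sqrt b \<le> p * ln (2 * d * T\<^sup>2)"
proof -
  define u where "u = ln (2 * d * T)"
  have L: "ln (2 * d * T\<^sup>2) = u + ln T"
    unfolding u_def using d T by (simp add: ln_mult power2_eq_square mult.assoc)
  have ln_T: "0 \<le> ln T" using T by simp
  have u: "1 \<le> u"
  proof -
    have "ln 4 \<le> u" unfolding u_def using d T mult_mono[of 1 d 2 "real T"] by (intro ln_mono) auto
    moreover have "ln (4::real) = 2 * ln 2" using ln_realpow[of 2 2] by simp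
    ultimately show ?thesis using ln2_ge_two_thirds by linarith
  qed
  have b_def': "b = (p + 1) * u + 2 * p * ln T" unfolding b_def u_def ..
  show b: "1 \<le> b"
    unfolding b_def' using u p ln_T mult_mono[of 1 "p + 1" 1 u] by (smt (verit) mult_nonneg_nonneg)
  have "T * (2 * d) = exp u" unfolding u_def using T d by simp
  then have "real T powr p * exp (- b / 2) * (T * (2 * d)) = exp (p * ln T) * exp (- b / 2) * exp u"
    using T by (simp add: powr_def)
  also have "\<dots> = exp (p * ln T + - b / 2 + u)" by (simp only: exp_add)
  also have "p * ln T + - b / 2 + u = (1 - p) * u / 2" unfolding b_def' by (simp add: field_simps)
  also have "exp ((1 - p) * u / 2) \<le> 1" using p u by (simp add: mult_nonpos_nonneg)
  finally show "real T powr p * exp (- b / 2) * (T * (2 * d)) \<le> 1" .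
  have "1 \<le> (2 * p - 2) * u" using p u mult_mono[of 1 "2 * p - 2" 1 u] by simp
  then show "2 * b + 1 \<le> 4 * p * ln (2 * d * T\<^sup>2)" unfolding b_def' L by (simp add: algebra_simps)
  have pL: "2 \<le> p * ln (2 * d * T\<^sup>2)" unfolding L using p u ln_T mult_mono[of 2 p 1 "u + ln T"] by simp
  have "b \<le> 2 * p * ln (2 * d * T\<^sup>2)"
    unfolding b_def' L using p u ln_T by (simp add: algebra_simps)
  also have "\<dots> \<le> (p * ln (2 * d * T\<^sup>2))\<^sup>2"
    using mult_right_mono[OF pL, of "p * ln (2 * d * T\<^sup>2)"] pL by (simp add: power2_eq_square mult.assoc)
  finally show "sqrt b \<le> p * ln (2 * d * T\<^sup>2)" using pL by (simp add: real_le_lsqrt)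
qed

lemma abs_component_le_maxnorm: "\<bar>x $ i\<bar> \<le> maxnorm x"
  unfolding maxnorm_def by (rule Max_ge) auto

lemma component_sq_le_maxnorm_sq: "(x $ i)\<^sup>2 \<le> (maxnorm x)\<^sup>2"
  using power_mono[OF abs_component_le_maxnorm abs_ge_zero, of x i 2] by simp

lemma maxnorm_nonneg: "0 \<le> maxnorm x"
  using abs_component_le_maxnorm[of x] abs_ge_zero order_trans by blast

lemma maxnorm_le: "(\<And>i. \<bar>x $ i\<bar> \<le> B) \<Longrightarrow> maxnorm x \<le> B"
  unfolding maxnorm_def by (rule Max.boundedI) auto

lemma maxnorm_attained: "\<exists>i. maxnorm x = \<bar>x $ i\<bar>"
proof -
  have "maxnorm x \<in> range (\<lambda>i. \<bar>x $ i\<bar>)" unfolding maxnorm_def by (rule Max_in) auto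
  then show ?thesis by auto
qed

lemma maxnorm_sum_le: "maxnorm (\<Sum>j\<in>J. x j) \<le> (\<Sum>j\<in>J. maxnorm (x j))"
proof (rule maxnorm_le)
  fix i
  have "\<bar>(\<Sum>j\<in>J. x j) $ i\<bar> \<le> (\<Sum>j\<in>J. \<bar>x j $ i\<bar>)" unfolding sum_component by (rule sum_abs)
  also have "\<dots> \<le> (\<Sum>j\<in>J. maxnorm (x j))" by (intro sum_mono abs_component_le_maxnorm)
  finally show "\<bar>(\<Sum>j\<in>J. x j) $ i\<bar> \<le> (\<Sum>j\<in>J. maxnorm (x j))" .
qed

lemma borel_measurable_maxnorm:
  "(\<And>i. (\<lambda>\<omega>. f \<omega> $ i) \<in> borel_measurable M) \<Longrightarrow> (\<lambda>\<omega>. maxnorm (f \<omega>)) \<in> borel_measurable M"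
  unfolding maxnorm_def by (intro borel_measurable_Max) auto

lemma measurable_filtration_mono:
  assumes "filtration \<Omega> F" "i \<le> j" "f \<in> measurable (F i) N"
  shows "f \<in> measurable (F j) N"
proof (rule measurable_from_subalg[OF _ assms(3)])
  show "subalgebra (F j) (F i)"
    using filtration.space_F[OF assms(1)] filtration.sets_F_mono[OF assms(1,2)]
    by (simp add: subalgebra_def)
qed

lemma (in finite_measure) integrable_powr_of_AE_bounded:
  fixes f :: "'a \<Rightarrow> real"
  assumes "f \<in> borel_measurable M" "0 \<le> r" "AE \<omega> in M. 0 \<le> f \<omega> \<and> f \<omega> \<le> B"
  shows "integrable M (\<lambda>\<omega>. f \<omega> powr r)"
proof (rule integrable_const_bound[where B = "B powr r"])
  show "AE \<omega> in M. norm (f \<omega> powr r) \<le> B powr r"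
    using assms(3) by eventually_elim (use assms(2) in \<open>auto intro: powr_mono2\<close>)
qed (use assms(1) in measurable)

lemma (in prob_space) integral_mult_eq_0_if_cond_exp_eq_0:
  assumes "subalgebra M N" "G \<in> borel_measurable N" "Y \<in> borel_measurable M"
    and "integrable M (\<lambda>\<omega>. G \<omega> * Y \<omega>)"
    and "AE \<omega> in M. real_cond_exp M N Y \<omega> = 0"
  shows "integral\<^sup>L M (\<lambda>\<omega>. G \<omega> * Y \<omega>) = 0"
proof -
  interpret N: sigma_finite_subalgebra M N
    using assms(1) by (intro finite_measure_subalgebra_is_sigma_finite)
      (auto intro!: finite_measure_subalgebra.intro finite_measure_subalgebra_axioms.intro
        finite_measure_axioms)
  have "G \<in> borel_measurable M" by (rule measurable_from_subalg[OF assms(1,2)])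
  then have "integral\<^sup>L M (\<lambda>\<omega>. G \<omega> * Y \<omega>) = integral\<^sup>L M (\<lambda>\<omega>. G \<omega> * real_cond_exp M N Y \<omega>)"
    using N.real_cond_exp_intg(2)[OF assms(4,2,3)] by simp
  also have "\<dots> = integral\<^sup>L M (\<lambda>\<omega>. 0)"
    using assms(5) \<open>G \<in> borel_measurable M\<close> by (intro integral_cong_AE) auto
  finally show ?thesis by simp
qed

definition exp_supermartingale :: "real \<Rightarrow> (nat \<Rightarrow> 'a \<Rightarrow> real) \<Rightarrow> nat \<Rightarrow> 'a \<Rightarrow> real" where
  "exp_supermartingale c Y n \<omega> = exp (\<Sum>j=1..n. c * Y j \<omega> - 2 * (c * Y j \<omega>)\<^sup>2)"

lemma exp_supermartingale_Suc:
  "exp_supermartingale c Y (Suc n) \<omega>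
     = exp_supermartingale c Y n \<omega> * exp (c * Y (Suc n) \<omega> - 2 * (c * Y (Suc n) \<omega>)\<^sup>2)"
  unfolding exp_supermartingale_def by (simp add: exp_add)

lemma exp_supermartingale_eq:
  "exp_supermartingale c Y n \<omega>
     = exp (c * (\<Sum>j=1..n. Y j \<omega>) - 2 * c\<^sup>2 * (\<Sum>j=1..n. (Y j \<omega>)\<^sup>2))"
  unfolding exp_supermartingale_def
  by (simp add: sum_subtractf sum_distrib_left power_mult_distrib mult.assoc)

lemma exp_supermartingale_pos: "0 < exp_supermartingale c Y n \<omega>"
  unfolding exp_supermartingale_def by simp

lemma exp_supermartingale_le: "exp_supermartingale c Y n \<omega> \<le> exp (n / 8)"
proof -
  have "(\<Sum>j=1..n. c * Y j \<omega> - 2 * (c * Y j \<omega>)\<^sup>2) \<le> (\<Sum>j=1..n. 1 / 8)"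
    by (intro sum_mono diff_twice_square_le)
  then show ?thesis unfolding exp_supermartingale_def by simp
qed

lemma borel_measurable_exp_supermartingale:
  "(\<And>j. 1 \<le> j \<Longrightarrow> j \<le> n \<Longrightarrow> Y j \<in> borel_measurable N)
    \<Longrightarrow> exp_supermartingale c Y n \<in> borel_measurable N"
  unfolding exp_supermartingale_def by measurable auto

lemma (in finite_measure) integrable_exp_supermartingale:
  "(\<And>j. 1 \<le> j \<Longrightarrow> j \<le> n \<Longrightarrow> Y j \<in> borel_measurable M)
    \<Longrightarrow> integrable M (exp_supermartingale c Y n)"
  by (rule integrable_const_bound[where B = "exp (n / 8)"])
    (auto simp: exp_supermartingale_le less_imp_le[OF exp_supermartingale_pos]
      intro: borel_measurable_exp_supermartingale)

lemma (in prob_space) integral_exp_supermartingale_le_1: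
  fixes Y :: "nat \<Rightarrow> 'a \<Rightarrow> real" and F :: "nat \<Rightarrow> 'a measure"
  assumes subalg: "\<And>j. subalgebra M (F j)" and filt: "filtration (space M) F"
    and adapted: "\<And>j. 1 \<le> j \<Longrightarrow> Y j \<in> borel_measurable (F j)"
    and int: "\<And>j. 1 \<le> j \<Longrightarrow> integrable M (Y j)"
    and cond_exp: "\<And>j. 1 \<le> j \<Longrightarrow> AE \<omega> in M. real_cond_exp M (F (j - 1)) (Y j) \<omega> = 0"
    and bounded: "\<And>j. 1 \<le> j \<Longrightarrow> AE \<omega> in M. \<bar>c * Y j \<omega>\<bar> \<le> 1 / 2"
  shows "integral\<^sup>L M (exp_supermartingale c Y n) \<le> 1"
proof (induction n)
  case 0
  then show ?case by (simp add: exp_supermartingale_def prob_space)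
next
  case (Suc n)
  let ?G = "exp_supermartingale c Y"
  have Y_M: "Y j \<in> borel_measurable M" if "1 \<le> j" for j
    by (rule measurable_from_subalg[OF subalg adapted[OF that]])
  have G_int: "integrable M (?G k)" for k
    using Y_M by (intro integrable_exp_supermartingale)
  have G_Fn: "?G n \<in> borel_measurable (F n)"
    by (intro borel_measurable_exp_supermartingale measurable_filtration_mono[OF filt _ adapted])
  have GY_int: "integrable M (\<lambda>\<omega>. ?G n \<omega> * Y (Suc n) \<omega>)"
  proof (rule Bochner_Integration.integrable_bound)
    show "integrable M (\<lambda>\<omega>. exp (real n / 8) * Y (Suc n) \<omega>)" using int by simp
    show "(\<lambda>\<omega>. ?G n \<omega> * Y (Suc n) \<omega>) \<in> borel_measurable M"
      using Y_M measurable_from_subalg[OF subalg G_Fn] by measurable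
    show "AE \<omega> in M. norm (?G n \<omega> * Y (Suc n) \<omega>) \<le> norm (exp (real n / 8) * Y (Suc n) \<omega>)"
      using exp_supermartingale_le[of c Y n] exp_supermartingale_pos[of c Y n]
      by (intro AE_I2) (simp add: abs_mult abs_of_pos mult_right_mono)
  qed
  have GY_0: "integral\<^sup>L M (\<lambda>\<omega>. ?G n \<omega> * Y (Suc n) \<omega>) = 0"
    using cond_exp[of "Suc n"] Y_M
    by (intro integral_mult_eq_0_if_cond_exp_eq_0[OF subalg G_Fn _ GY_int]) auto
  have "AE \<omega> in M. \<bar>c * Y (Suc n) \<omega>\<bar> \<le> 1 / 2" using bounded[of "Suc n"] by simp
  then have "AE \<omega> in M. ?G (Suc n) \<omega> \<le> ?G n \<omega> + c * (?G n \<omega> * Y (Suc n) \<omega>)"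
  proof eventually_elim
    case (elim \<omega>)
    have "?G (Suc n) \<omega> \<le> ?G n \<omega> * (1 + c * Y (Suc n) \<omega>)"
      unfolding exp_supermartingale_Suc using exp_diff_twice_square_le[OF elim]
      by (intro mult_left_mono) (auto intro: less_imp_le exp_supermartingale_pos)
    then show ?case by (simp add: algebra_simps)
  qed
  then have "integral\<^sup>L M (?G (Suc n)) \<le> integral\<^sup>L M (\<lambda>\<omega>. ?G n \<omega> + c * (?G n \<omega> * Y (Suc n) \<omega>))"
    using G_int GY_int by (intro integral_mono_AE) auto
  also have "\<dots> = integral\<^sup>L M (?G n)"
    using G_int GY_int GY_0 by simp
  finally show ?case using Suc by simp
qed

definition exp_supermartingale_sum :: "real \<Rightarrow> (nat \<Rightarrow> 'a \<Rightarrow> real ^ 'd) \<Rightarrow> nat \<Rightarrow> 'a \<Rightarrow> real" where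
  "exp_supermartingale_sum c X n \<omega>
     = (\<Sum>i\<in>UNIV. \<Sum>s\<in>{-1, 1}. exp_supermartingale (s * c) (\<lambda>j \<omega>. X j \<omega> $ i) n \<omega>)"

lemma exp_le_exp_supermartingale_sum:
  fixes X :: "nat \<Rightarrow> 'a \<Rightarrow> real ^ 'd"
  assumes "0 \<le> c"
  shows "exp (c * maxnorm (\<Sum>j=1..n. X j \<omega>) - 2 * c\<^sup>2 * (\<Sum>j=1..n. (maxnorm (X j \<omega>))\<^sup>2))
    \<le> exp_supermartingale_sum c X n \<omega>"
proof -
  obtain i where i: "maxnorm (\<Sum>j=1..n. X j \<omega>) = \<bar>\<Sum>j=1..n. X j \<omega> $ i\<bar>"
    using maxnorm_attained by (metis sum_component)
  define s :: real where "s = (if 0 \<le> (\<Sum>j=1..n. X j \<omega> $ i) then 1 else -1)"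
  have s: "s \<in> {-1, 1}" "s\<^sup>2 = 1" unfolding s_def by auto
  have lin: "c * maxnorm (\<Sum>j=1..n. X j \<omega>) = s * c * (\<Sum>j=1..n. X j \<omega> $ i)"
    unfolding i s_def by simp
  have "2 * c\<^sup>2 * (\<Sum>j=1..n. (X j \<omega> $ i)\<^sup>2) \<le> 2 * c\<^sup>2 * (\<Sum>j=1..n. (maxnorm (X j \<omega>))\<^sup>2)"
    by (intro mult_left_mono sum_mono component_sq_le_maxnorm_sq) auto
  then have "exp (c * maxnorm (\<Sum>j=1..n. X j \<omega>) - 2 * c\<^sup>2 * (\<Sum>j=1..n. (maxnorm (X j \<omega>))\<^sup>2))
      \<le> exp_supermartingale (s * c) (\<lambda>j \<omega>. X j \<omega> $ i) n \<omega>"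
    unfolding exp_supermartingale_eq lin using s(2) by (simp add: power_mult_distrib)
  also have "\<dots> \<le> (\<Sum>s\<in>{-1, 1}. exp_supermartingale (s * c) (\<lambda>j \<omega>. X j \<omega> $ i) n \<omega>)"
    using s(1) by (intro member_le_sum) (auto intro: less_imp_le[OF exp_supermartingale_pos])
  also have "\<dots> \<le> exp_supermartingale_sum c X n \<omega>"
    unfolding exp_supermartingale_sum_def
    by (intro member_le_sum sum_nonneg) (auto intro: less_imp_le[OF exp_supermartingale_pos])
  finally show ?thesis .
qed

locale bounded_martingale_difference = prob_space M for M :: "'a measure" +
  fixes F :: "nat \<Rightarrow> 'a measure" and X :: "nat \<Rightarrow> 'a \<Rightarrow> real ^ 'd" and \<kappa> :: real
  assumes mds: "martingale_difference_seq M F X"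
    and bounded: "AE \<omega> in M. \<forall>j\<ge>1. maxnorm (X j \<omega>) \<le> \<kappa>"
begin

lemma subalgebra_F: "subalgebra M (F j)"
  and filtration_F: "filtration (space M) F"
  and component_adapted: "1 \<le> j \<Longrightarrow> (\<lambda>\<omega>. X j \<omega> $ i) \<in> borel_measurable (F j)"
  and integrable_component: "1 \<le> j \<Longrightarrow> integrable M (\<lambda>\<omega>. X j \<omega> $ i)"
  and cond_exp_component: "1 \<le> j \<Longrightarrow> AE \<omega> in M. real_cond_exp M (F (j - 1)) (\<lambda>\<omega>. X j \<omega> $ i) \<omega> = 0"
  using mds unfolding martingale_difference_seq_def by auto

lemma measurable_component: "1 \<le> j \<Longrightarrow> (\<lambda>\<omega>. X j \<omega> $ i) \<in> borel_measurable M"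
  by (rule measurable_from_subalg[OF subalgebra_F component_adapted])

lemma measurable_maxnorm_sum: "(\<lambda>\<omega>. maxnorm (\<Sum>j=1..n. X j \<omega>)) \<in> borel_measurable M"
  using measurable_component by (intro borel_measurable_maxnorm) (auto simp: sum_component)

lemma measurable_maxnorm: "1 \<le> j \<Longrightarrow> (\<lambda>\<omega>. maxnorm (X j \<omega>)) \<in> borel_measurable M"
  using measurable_component by (intro borel_measurable_maxnorm)

lemma bound_nonneg: "0 \<le> \<kappa>"
proof -
  have "AE \<omega> in M. 0 \<le> \<kappa>"
    using bounded by eventually_elim (use maxnorm_nonneg order_trans in blast)
  then show ?thesis by simp
qed

lemma AE_maxnorm_sum_le: "AE \<omega> in M. maxnorm (\<Sum>j=1..n. X j \<omega>) \<le> n * \<kappa>"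
  using bounded
proof eventually_elim
  case (elim \<omega>)
  have "maxnorm (\<Sum>j=1..n. X j \<omega>) \<le> (\<Sum>j=1..n. maxnorm (X j \<omega>))" by (rule maxnorm_sum_le)
  also have "\<dots> \<le> (\<Sum>j=1..n. \<kappa>)" using elim by (intro sum_mono) auto
  finally show ?case by simp
qed

lemma AE_sum_sq_maxnorm_le: "AE \<omega> in M. (\<Sum>j=1..n. (maxnorm (X j \<omega>))\<^sup>2) \<le> n * \<kappa>\<^sup>2"
  using bounded
proof eventually_elim
  case (elim \<omega>)
  have "(\<Sum>j=1..n. (maxnorm (X j \<omega>))\<^sup>2) \<le> (\<Sum>j=1..n. \<kappa>\<^sup>2)"
    using elim maxnorm_nonneg by (intro sum_mono power_mono) auto
  then show ?case by simp
qed

lemma integrable_exp_supermartingale_sum: "integrable M (exp_supermartingale_sum c X n)"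
  unfolding exp_supermartingale_sum_def
  using measurable_component by (intro Bochner_Integration.integrable_sum integrable_exp_supermartingale)

lemma integral_exp_supermartingale_sum_le:
  assumes "0 \<le> c" "c * \<kappa> \<le> 1 / 2"
  shows "integral\<^sup>L M (exp_supermartingale_sum c X n) \<le> 2 * CARD('d)"
proof -
  have le_1: "integral\<^sup>L M (exp_supermartingale (s * c) (\<lambda>j \<omega>. X j \<omega> $ i) n) \<le> 1"
    if s: "s \<in> {-1, 1}" for s i
  proof (rule integral_exp_supermartingale_le_1[OF subalgebra_F filtration_F component_adapted
        integrable_component cond_exp_component])
    show "AE \<omega> in M. \<bar>s * c * X j \<omega> $ i\<bar> \<le> 1 / 2" if "1 \<le> j" for j
      using bounded
    proof eventually_elim
      case (elim \<omega>)
      have "\<bar>s * c * X j \<omega> $ i\<bar> = c * \<bar>X j \<omega> $ i\<bar>" using s assms(1) by (auto simp: abs_mult)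
      also have "\<dots> \<le> c * \<kappa>"
        using elim that abs_component_le_maxnorm[of "X j \<omega>" i] assms(1)
        by (intro mult_left_mono) (auto intro: order_trans)
      finally show ?case using assms(2) by simp
    qed
  qed
  let ?G = "\<lambda>s i. exp_supermartingale (s * c) (\<lambda>j \<omega>. X j \<omega> $ i) n"
  have int: "integrable M (?G s i)" for s i
    using measurable_component by (intro integrable_exp_supermartingale)
  have "integral\<^sup>L M (exp_supermartingale_sum c X n)
      = (\<Sum>i\<in>UNIV. integral\<^sup>L M (\<lambda>\<omega>. \<Sum>s\<in>{-1, 1}. ?G s i \<omega>))"
    unfolding exp_supermartingale_sum_def
    by (intro Bochner_Integration.integral_sum Bochner_Integration.integrable_sum int)
  also have "\<dots> = (\<Sum>i\<in>UNIV. \<Sum>s\<in>{-1, 1}. integral\<^sup>L M (?G s i))"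
    by (intro sum.cong refl Bochner_Integration.integral_sum int)
  also have "\<dots> \<le> (\<Sum>i\<in>(UNIV :: 'd set). \<Sum>s\<in>{-1, 1::real}. 1)"
    by (intro sum_mono le_1)
  finally show ?thesis by simp
qed

lemma integrable_maxnorm_sum_powr: "0 \<le> r \<Longrightarrow> integrable M (\<lambda>\<omega>. maxnorm (\<Sum>j=1..n. X j \<omega>) powr r)"
  using AE_maxnorm_sum_le measurable_maxnorm_sum
  by (intro integrable_powr_of_AE_bounded) (auto simp: maxnorm_nonneg)

lemma integrable_sum_sq_maxnorm_powr:
  "0 \<le> r \<Longrightarrow> integrable M (\<lambda>\<omega>. (\<Sum>j=1..n. (maxnorm (X j \<omega>))\<^sup>2) powr r)"
  using AE_sum_sq_maxnorm_le measurable_maxnorm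
  by (intro integrable_powr_of_AE_bounded) (auto simp: sum_nonneg)

lemma integral_sum_sq_maxnorm_powr_le:
  assumes p: "2 \<le> p"
  shows "integral\<^sup>L M (\<lambda>\<omega>. (\<Sum>j=1..n. (maxnorm (X j \<omega>))\<^sup>2) powr (p / 2))
    \<le> sqrt (\<Sum>j=1..n. (integral\<^sup>L M (\<lambda>\<omega>. maxnorm (X j \<omega>) powr p)) powr (2 / p)) powr p"
proof -
  have int_j: "integrable M (\<lambda>\<omega>. ((maxnorm (X j \<omega>))\<^sup>2) powr (p / 2))" if "j \<in> {1..n}" for j
  proof (rule integrable_powr_of_AE_bounded)
    show "AE \<omega> in M. 0 \<le> (maxnorm (X j \<omega>))\<^sup>2 \<and> (maxnorm (X j \<omega>))\<^sup>2 \<le> \<kappa>\<^sup>2"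
      using bounded by eventually_elim (use that maxnorm_nonneg in \<open>auto intro: power_mono\<close>)
  qed (use p measurable_maxnorm that in auto)
  have "integral\<^sup>L M (\<lambda>\<omega>. (\<Sum>j=1..n. (maxnorm (X j \<omega>))\<^sup>2) powr (p / 2))
    \<le> (\<Sum>j=1..n. (integral\<^sup>L M (\<lambda>\<omega>. ((maxnorm (X j \<omega>))\<^sup>2) powr (p / 2))) powr (1 / (p / 2))) powr (p / 2)"
    using p int_j integrable_sum_sq_maxnorm_powr by (intro integral_powr_sum_le_sum_powr) auto
  also have "\<dots> = (sqrt (\<Sum>j=1..n. (integral\<^sup>L M (\<lambda>\<omega>. maxnorm (X j \<omega>) powr p)) powr (2 / p)))\<^sup>2 powr (p / 2)"
    by (simp add: square_powr_half maxnorm_nonneg sum_nonneg)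
  also have "\<dots> = sqrt (\<Sum>j=1..n. (integral\<^sup>L M (\<lambda>\<omega>. maxnorm (X j \<omega>) powr p)) powr (2 / p)) powr p"
    by (intro square_powr_half) (simp add: sum_nonneg)
  finally show ?thesis .
qed

lemma AE_maxnorm_sum_powr_le:
  fixes T :: nat
  assumes p: "0 < p" and b: "1 \<le> b"
  shows "AE \<omega> in M. maxnorm (\<Sum>j=1..T. X j \<omega>) powr p
    \<le> (2 * \<kappa> * b) powr p + (16 * b * (\<Sum>j=1..T. (maxnorm (X j \<omega>))\<^sup>2)) powr (p / 2)
      + (T * \<kappa>) powr p * exp (- b / 2) * (\<Sum>m<T. exp_supermartingale_sum (1 / (2 * \<kappa> * 2 ^ m)) X T \<omega>)"
  using AE_maxnorm_sum_le[of T]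
proof eventually_elim
  case (elim \<omega>)
  show ?case
    using bound_nonneg b p maxnorm_nonneg elim
    by (intro powr_le_peeling_bound exp_le_exp_supermartingale_sum)
      (auto simp: sum_nonneg exp_supermartingale_sum_def less_imp_le[OF exp_supermartingale_pos]
        intro!: sum_nonneg)
qed

lemma integral_maxnorm_sum_powr_le:
  fixes T :: nat
  assumes p: "2 \<le> p" and b: "1 \<le> b"
  defines "A \<equiv> sqrt (\<Sum>j=1..T. (integral\<^sup>L M (\<lambda>\<omega>. maxnorm (X j \<omega>) powr p)) powr (2 / p))"
  shows "integral\<^sup>L M (\<lambda>\<omega>. maxnorm (\<Sum>j=1..T. X j \<omega>) powr p)
    \<le> (2 * \<kappa> * b) powr p + (4 * sqrt b * A) powr p
      + \<kappa> powr p * (T powr p * exp (- b / 2) * (T * (2 * CARD('d))))"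
proof -
  define Q where "Q \<omega> = (\<Sum>j=1..T. (maxnorm (X j \<omega>))\<^sup>2)" for \<omega>
  define Z where "Z m = exp_supermartingale_sum (1 / (2 * \<kappa> * 2 ^ m)) X T" for m :: nat
  have Q: "0 \<le> Q \<omega>" for \<omega> unfolding Q_def by (simp add: sum_nonneg)
  have int_Q: "integrable M (\<lambda>\<omega>. Q \<omega> powr (p / 2))"
    unfolding Q_def using p by (intro integrable_sum_sq_maxnorm_powr) simp
  have int_Z: "integrable M (Z m)" for m
    unfolding Z_def by (rule integrable_exp_supermartingale_sum)
  have EQ: "integral\<^sup>L M (\<lambda>\<omega>. Q \<omega> powr (p / 2)) \<le> A powr p"
    unfolding Q_def A_def by (rule integral_sum_sq_maxnorm_powr_le[OF p])
  have EZ: "integral\<^sup>L M (Z m) \<le> 2 * CARD('d)" for m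
    unfolding Z_def using bound_nonneg
    by (intro integral_exp_supermartingale_sum_le) (auto simp: field_simps)
  have "integral\<^sup>L M (\<lambda>\<omega>. maxnorm (\<Sum>j=1..T. X j \<omega>) powr p)
      \<le> integral\<^sup>L M (\<lambda>\<omega>. (2 * \<kappa> * b) powr p + (16 * b) powr (p / 2) * Q \<omega> powr (p / 2)
            + (T * \<kappa>) powr p * exp (- b / 2) * (\<Sum>m<T. Z m \<omega>))"
    using AE_maxnorm_sum_powr_le[of p b T] p b Q integrable_maxnorm_sum_powr int_Q int_Z
    by (intro integral_mono_AE) (auto simp: Q_def Z_def powr_mult)
  also have "\<dots> = (2 * \<kappa> * b) powr p + (16 * b) powr (p / 2) * integral\<^sup>L M (\<lambda>\<omega>. Q \<omega> powr (p / 2))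
      + (T * \<kappa>) powr p * exp (- b / 2) * (\<Sum>m<T. integral\<^sup>L M (Z m))"
    using int_Q int_Z by (simp add: Bochner_Integration.integral_sum Bochner_Integration.integrable_sum prob_space)
  also have "\<dots> \<le> (2 * \<kappa> * b) powr p + (16 * b) powr (p / 2) * A powr p
      + (T * \<kappa>) powr p * exp (- b / 2) * (T * (2 * CARD('d)))"
    using EQ sum_bounded_above[of "{..<T}" "\<lambda>m. integral\<^sup>L M (Z m)", OF EZ]
    by (intro add_mono mult_left_mono) auto
  also have "\<dots> = (2 * \<kappa> * b) powr p + (4 * sqrt b * A) powr p
      + \<kappa> powr p * (T powr p * exp (- b / 2) * (T * (2 * CARD('d))))"
  proof -
    have "(16 * b) powr (p / 2) = (4 * sqrt b) powr p"
      using square_powr_half[of "4 * sqrt b" p] b by (simp add: power_mult_distrib)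
    then show ?thesis using b bound_nonneg by (simp add: powr_mult A_def)
  qed
  finally show ?thesis .
qed

end

theorem lemmaD9:
  fixes M :: "'a measure" and F :: "nat \<Rightarrow> 'a measure"
    and X :: "nat \<Rightarrow> 'a \<Rightarrow> real ^ 'd"
    and T :: nat and p \<kappa> :: real
  assumes "prob_space M"
    and "T \<ge> 2" and "p \<ge> 2"
    and mds: "martingale_difference_seq M F X"
    and cov: "\<And>j i k. j \<ge> 1 \<Longrightarrow> integrable M (\<lambda>\<omega>. X j \<omega> $ i * X j \<omega> $ k)"
    and bdd: "AE \<omega> in M. \<forall>j\<ge>1. maxnorm (X j \<omega>) \<le> \<kappa>"
  shows "(integral\<^sup>L M (\<lambda>\<omega>. maxnorm (\<Sum>j=1..T. X j \<omega>) powr p)) powr (1 / p)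
         \<le> 4 * p * ln (2 * real CARD('d) * real T ^ 2) *
            (\<kappa> + sqrt (\<Sum>j=1..T. (integral\<^sup>L M (\<lambda>\<omega>. maxnorm (X j \<omega>) powr p)) powr (2 / p)))"
proof -
  interpret bounded_martingale_difference M F X \<kappa>
    using assms(1) mds bdd by (intro bounded_martingale_difference.intro bounded_martingale_difference_axioms.intro)
  define d where "d = real CARD('d)"
  define b where "b = (p + 1) * ln (2 * d * T) + 2 * p * ln T"
  define A where "A = sqrt (\<Sum>j=1..T. (integral\<^sup>L M (\<lambda>\<omega>. maxnorm (X j \<omega>) powr p)) powr (2 / p))"
  define L where "L = ln (2 * d * T\<^sup>2)"
  have "1 \<le> d" unfolding d_def by (simp add: Suc_le_eq)
  note b = peeling_parameter_bounds[OF this assms(2,3), folded b_def L_def]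
  have A: "0 \<le> A" and \<kappa>: "0 \<le> \<kappa>" unfolding A_def by (simp_all add: sum_nonneg bound_nonneg)
  have "integral\<^sup>L M (\<lambda>\<omega>. maxnorm (\<Sum>j=1..T. X j \<omega>) powr p)
      \<le> (2 * \<kappa> * b) powr p + (4 * sqrt b * A) powr p + \<kappa> powr p"
    using integral_maxnorm_sum_powr_le[OF assms(3) b(1), of T, folded A_def]
      mult_left_mono[OF b(2), of "\<kappa> powr p"] by (simp add: d_def)
  then have "(integral\<^sup>L M (\<lambda>\<omega>. maxnorm (\<Sum>j=1..T. X j \<omega>) powr p)) powr (1 / p)
      \<le> 2 * \<kappa> * b + 4 * sqrt b * A + \<kappa>"
    using A \<kappa> b(1) assms(3) by (intro powr_root_le_add_of_le_sum_powr) (auto intro: integral_nonneg_AE)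
  also have "\<dots> \<le> 4 * p * L * (\<kappa> + A)"
  proof -
    have "(2 * b + 1) * \<kappa> \<le> 4 * p * L * \<kappa>" using b(3) \<kappa> by (rule mult_right_mono)
    moreover have "4 * sqrt b * A \<le> 4 * (p * L) * A" using b(4) A by (intro mult_right_mono) auto
    ultimately show ?thesis by (simp add: algebra_simps)
  qed
  finally show ?thesis unfolding L_def d_def A_def by (simp add: power2_eq_square)
qed

end
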